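(* A connected block-cactus graph $G$ is $1$-perfectly orientable if and only if at most one block of $G$ is a cycle of length at least four.
   Context: All graphs are finite and simple. A graph is biconnected if it is connected with no cut vertex; a block is a maximal biconnected subgraph. A block-cactus graph is a graph each of whose blocks is either a cycle or a complete graph. An orientation of $G$ is $1$-perfect if for every vertex the out-neighborhood is a clique in $G$; $G$ is $1$-perfectly orientable if it has a $1$-perfect orientation. *)

theory Defs
  imports Main
begin

definition simple_graph :: "'a set \<Rightarrow> ('a \<Rightarrow> 'a \<Rightarrow> bool) \<Rightarrow> bool" where
  "simple_graph V E \<longleftrightarrow> finite V \<and>
     (\<forall>u v. E u v \<longrightarrow> u \<in> V \<and> v \<in> V \<and> u \<noteq> v \<and> E v u)"

definition reachable :: "'a set \<Rightarrow> ('a \<Rightarrow> 'a \<Rightarrow> bool) \<Rightarrow> 'a \<Rightarrow> 'a \<Rightarrow> bool" where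
  "reachable V E u v \<longleftrightarrow> u \<in> V \<and> v \<in> V \<and>
     (\<lambda>x y. x \<in> V \<and> y \<in> V \<and> E x y)\<^sup>*\<^sup>* u v"

definition connected_graph :: "'a set \<Rightarrow> ('a \<Rightarrow> 'a \<Rightarrow> bool) \<Rightarrow> bool" where
  "connected_graph V E \<longleftrightarrow> V \<noteq> {} \<and> (\<forall>u\<in>V. \<forall>v\<in>V. reachable V E u v)"

definition del_vertex :: "'a \<Rightarrow> ('a \<Rightarrow> 'a \<Rightarrow> bool) \<Rightarrow> 'a \<Rightarrow> 'a \<Rightarrow> bool" where
  "del_vertex w E = (\<lambda>x y. E x y \<and> x \<noteq> w \<and> y \<noteq> w)"

definition cut_vertex :: "'a set \<Rightarrow> ('a \<Rightarrow> 'a \<Rightarrow> bool) \<Rightarrow> 'a \<Rightarrow> bool" where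
  "cut_vertex V E w \<longleftrightarrow> w \<in> V \<and>
     (\<exists>x\<in>V - {w}. \<exists>y\<in>V - {w}. reachable V E x y \<and>
        \<not> reachable (V - {w}) (del_vertex w E) x y)"

definition biconnected :: "'a set \<Rightarrow> ('a \<Rightarrow> 'a \<Rightarrow> bool) \<Rightarrow> bool" where
  "biconnected V E \<longleftrightarrow> connected_graph V E \<and> (\<forall>w. \<not> cut_vertex V E w)"

definition subgraph :: "'a set \<Rightarrow> ('a \<Rightarrow> 'a \<Rightarrow> bool) \<Rightarrow> 'a set \<Rightarrow> ('a \<Rightarrow> 'a \<Rightarrow> bool) \<Rightarrow> bool" where
  "subgraph W F V E \<longleftrightarrow> simple_graph W F \<and> W \<subseteq> V \<and> (\<forall>u v. F u v \<longrightarrow> E u v)"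

definition is_block :: "'a set \<Rightarrow> ('a \<Rightarrow> 'a \<Rightarrow> bool) \<Rightarrow> 'a set \<Rightarrow> ('a \<Rightarrow> 'a \<Rightarrow> bool) \<Rightarrow> bool" where
  "is_block V E W F \<longleftrightarrow> subgraph W F V E \<and> biconnected W F \<and>
     (\<forall>W' F'. subgraph W' F' V E \<and> biconnected W' F' \<and> W \<subseteq> W' \<and> (\<forall>u v. F u v \<longrightarrow> F' u v)
        \<longrightarrow> W' = W \<and> F' = F)"

definition degree :: "'a set \<Rightarrow> ('a \<Rightarrow> 'a \<Rightarrow> bool) \<Rightarrow> 'a \<Rightarrow> nat" where
  "degree V E v = card {u \<in> V. E v u}"

definition is_cycle_graph :: "'a set \<Rightarrow> ('a \<Rightarrow> 'a \<Rightarrow> bool) \<Rightarrow> bool" where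
  "is_cycle_graph W F \<longleftrightarrow> simple_graph W F \<and> card W \<ge> 3 \<and> connected_graph W F \<and>
     (\<forall>v\<in>W. degree W F v = 2)"

definition is_complete_graph :: "'a set \<Rightarrow> ('a \<Rightarrow> 'a \<Rightarrow> bool) \<Rightarrow> bool" where
  "is_complete_graph W F \<longleftrightarrow> simple_graph W F \<and> (\<forall>u\<in>W. \<forall>v\<in>W. u \<noteq> v \<longrightarrow> F u v)"

definition block_cactus :: "'a set \<Rightarrow> ('a \<Rightarrow> 'a \<Rightarrow> bool) \<Rightarrow> bool" where
  "block_cactus V E \<longleftrightarrow>
     (\<forall>W F. is_block V E W F \<longrightarrow> is_cycle_graph W F \<or> is_complete_graph W F)"

definition orientation :: "'a set \<Rightarrow> ('a \<Rightarrow> 'a \<Rightarrow> bool) \<Rightarrow> ('a \<Rightarrow> 'a \<Rightarrow> bool) \<Rightarrow> bool" where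
  "orientation V E D \<longleftrightarrow>
     (\<forall>u v. D u v \<longrightarrow> E u v) \<and> (\<forall>u v. E u v \<longrightarrow> D u v \<or> D v u) \<and>
     (\<forall>u v. D u v \<longrightarrow> \<not> D v u)"

definition one_perfect_orientation :: "'a set \<Rightarrow> ('a \<Rightarrow> 'a \<Rightarrow> bool) \<Rightarrow> ('a \<Rightarrow> 'a \<Rightarrow> bool) \<Rightarrow> bool" where
  "one_perfect_orientation V E D \<longleftrightarrow> orientation V E D \<and>
     (\<forall>v\<in>V. \<forall>x y. D v x \<and> D v y \<and> x \<noteq> y \<longrightarrow> E x y)"

definition one_perfectly_orientable :: "'a set \<Rightarrow> ('a \<Rightarrow> 'a \<Rightarrow> bool) \<Rightarrow> bool" where
  "one_perfectly_orientable V E \<longleftrightarrow> (\<exists>D. one_perfect_orientation V E D)"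

end

(*
  A 1-perfect orientation gives every vertex of a long cycle block exactly one out-neighbour in
  the block (two would be adjacent, i.e. a chord), and every edge leaving the block points into
  it. Two long cycle blocks sharing a vertex therefore share its out-neighbour and coincide. If
  they were disjoint, the orientation along a shortest path between them would change direction
  at an inner vertex whose two out-neighbours are then equal or adjacent, giving a shorter path.

  Conversely, let the core be the unique long cycle block (or any single vertex) and let v be a
  vertex farthest from it. The neighbourhood of v is a clique: a shortest path between two
  non-adjacent neighbours avoiding v would close up to a cycle through v lying in a long cycle
  block, which is contained in the core. Deleting such a simplicial vertex preserves all hypotheses, and an
  orientation of the rest extends by orienting every edge at v away from v. When nothing lies
  outside the core the graph has maximum degree two and can be oriented with out-degree at most
  one.
*)

theory Submission
  imports Defs "HOL-Library.Product_Order"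
begin

lemma simple_graph_edgeD:
  assumes "simple_graph V E" "E u w"
  shows "u \<in> V" "w \<in> V" "u \<noteq> w" "E w u"
  using assms unfolding simple_graph_def by blast+

lemma simple_graph_del_vertex: "simple_graph V E \<Longrightarrow> simple_graph (V - {z}) (del_vertex z E)"
  unfolding simple_graph_def del_vertex_def by blast

lemma reachable_refl: "x \<in> V \<Longrightarrow> reachable V E x x"
  unfolding reachable_def by auto

lemma reachable_edge: "x \<in> V \<Longrightarrow> y \<in> V \<Longrightarrow> E x y \<Longrightarrow> reachable V E x y"
  unfolding reachable_def by auto

lemma reachable_trans: "reachable V E x y \<Longrightarrow> reachable V E y z \<Longrightarrow> reachable V E x z"
  unfolding reachable_def by auto

lemma reachable_mono:
  assumes "reachable V E x y" "V \<subseteq> V'" "\<And>u w. u \<in> V \<Longrightarrow> w \<in> V \<Longrightarrow> E u w \<Longrightarrow> E' u w"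
  shows "reachable V' E' x y"
proof -
  have "(\<lambda>x y. x \<in> V \<and> y \<in> V \<and> E x y)\<^sup>*\<^sup>* x y" "x \<in> V" "y \<in> V"
    using assms(1) unfolding reachable_def by auto
  moreover from this(1) have "(\<lambda>x y. x \<in> V' \<and> y \<in> V' \<and> E' x y)\<^sup>*\<^sup>* x y"
    by (rule rtranclp_mono[THEN predicate2D, rotated]) (use assms(2,3) in auto)
  ultimately show ?thesis using assms(2) unfolding reachable_def by auto
qed

lemma reachable_sym:
  assumes "\<And>u w. E u w \<Longrightarrow> E w u" "reachable V E x y"
  shows "reachable V E y x"
proof -
  let ?R = "\<lambda>x y. x \<in> V \<and> y \<in> V \<and> E x y"
  have "?R\<^sup>*\<^sup>* x y" using assms(2) unfolding reachable_def by auto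
  then have "?R\<^sup>*\<^sup>* y x"
  proof (induction rule: rtranclp_induct)
    case (step y z)
    then have "?R z y" using assms(1) by blast
    then show ?case using step.IH by (rule converse_rtranclp_into_rtranclp)
  qed simp
  then show ?thesis using assms(2) unfolding reachable_def by auto
qed

lemma reachable_sym_simple:
  assumes "simple_graph V' E" "reachable V E x y"
  shows "reachable V E y x"
  using reachable_sym[OF simple_graph_edgeD(4)[OF assms(1)] assms(2)] .

lemma connected_graph_reachable: "connected_graph V E \<Longrightarrow> x \<in> V \<Longrightarrow> y \<in> V \<Longrightarrow> reachable V E x y"
  by (simp add: connected_graph_def)

definition walk :: "('a \<Rightarrow> 'a \<Rightarrow> bool) \<Rightarrow> (nat \<Rightarrow> 'a) \<Rightarrow> nat \<Rightarrow> bool" where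
  "walk E p n \<longleftrightarrow> (\<forall>i<n. E (p i) (p (Suc i)))"

lemma walk_const: "walk E (\<lambda>_. x) 0"
  by (simp add: walk_def)

lemma walk_take: "walk E p n \<Longrightarrow> m \<le> n \<Longrightarrow> walk E p m"
  by (auto simp: walk_def)

lemma walk_drop: "walk E p n \<Longrightarrow> i \<le> n \<Longrightarrow> walk E (\<lambda>j. p (j + i)) (n - i)"
  by (auto simp: walk_def)

lemma rtranclp_imp_walk: "R\<^sup>*\<^sup>* x y \<Longrightarrow> \<exists>p n. p 0 = x \<and> p n = y \<and> walk R p n"
proof (induction rule: rtranclp_induct)
  case base
  show ?case by (intro exI[of _ "\<lambda>_. x"] exI[of _ 0]) (simp add: walk_def)
next
  case (step y z)
  then obtain p n where p: "p 0 = x" "p n = y" "walk R p n" by blast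
  define q where "q = p(Suc n := z)"
  have "walk R q (Suc n)" "q 0 = x" "q (Suc n) = z"
    using p step(2) by (auto simp: q_def walk_def less_Suc_eq)
  then show ?case by blast
qed

lemma walk_imp_rtranclp: "walk R p n \<Longrightarrow> R\<^sup>*\<^sup>* (p 0) (p n)"
  by (induction n) (auto simp: walk_def intro: rtranclp.rtrancl_into_rtrancl)

lemma walk_in_vertices:
  assumes "simple_graph V E" "walk E p n" "p 0 \<in> V" "i \<le> n"
  shows "p i \<in> V"
proof (cases i)
  case (Suc j)
  then have "E (p j) (p i)" using assms(2,4) unfolding walk_def by simp
  then show ?thesis using simple_graph_edgeD(2)[OF assms(1)] by blast
qed (use assms in simp)

lemma reachable_iff_walk:
  assumes "simple_graph V E" "x \<in> V"
  shows "reachable V E x y \<longleftrightarrow> (\<exists>p n. p 0 = x \<and> p n = y \<and> walk E p n)"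
proof
  assume "reachable V E x y"
  then have "(\<lambda>x y. x \<in> V \<and> y \<in> V \<and> E x y)\<^sup>*\<^sup>* x y" unfolding reachable_def by simp
  then obtain p n where "p 0 = x" "p n = y" "walk (\<lambda>x y. x \<in> V \<and> y \<in> V \<and> E x y) p n"
    using rtranclp_imp_walk[of _ x y] by blast
  then show "\<exists>p n. p 0 = x \<and> p n = y \<and> walk E p n" by (auto simp: walk_def)
next
  assume "\<exists>p n. p 0 = x \<and> p n = y \<and> walk E p n"
  then obtain p n where p: "p 0 = x" "p n = y" "walk E p n" by blast
  then have "walk (\<lambda>x y. x \<in> V \<and> y \<in> V \<and> E x y) p n"
    using walk_in_vertices[OF assms(1) p(3)] assms(2) by (auto simp: walk_def)
  then have "(\<lambda>x y. x \<in> V \<and> y \<in> V \<and> E x y)\<^sup>*\<^sup>* x y"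
    using walk_imp_rtranclp p(1,2) by metis
  moreover have "y \<in> V" using walk_in_vertices[OF assms(1) p(3)] assms(2) p by blast
  ultimately show "reachable V E x y" using assms(2) unfolding reachable_def by blast
qed

lemma walk_skip_loop:
  assumes "walk E p n" "a < b" "b \<le> n" "p a = p b"
  shows "\<exists>q. walk E q (n - (b - a)) \<and> q 0 = p 0 \<and> q (n - (b - a)) = p n"
proof (intro exI conjI)
  let ?q = "\<lambda>i. if i \<le> a then p i else p (i + (b - a))"
  show "walk E ?q (n - (b - a))"
    unfolding walk_def
  proof (intro allI impI)
    fix i assume i: "i < n - (b - a)"
    consider "i < a" | "i = a" | "i > a" by linarith
    then show "E (?q i) (?q (Suc i))"
    proof cases
      case 2
      have "E (p b) (p (Suc b))" using assms(1) i 2 assms(2,3) by (auto simp: walk_def)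
      moreover have "Suc a + (b - a) = Suc b" using assms(2) by simp
      ultimately show ?thesis using 2 assms(4) by simp
    qed (use assms i in \<open>auto simp: walk_def\<close>)
  qed
  show "?q 0 = p 0" by simp
  show "?q (n - (b - a)) = p n"
    using assms(2,3,4) by (cases "n = b") auto
qed

lemma walk_skip_chord:
  assumes "walk E p n" "a < b" "b \<le> n" "E (p a) (p b)"
  shows "\<exists>q. walk E q (n - (b - a) + 1) \<and> q 0 = p 0 \<and> q (n - (b - a) + 1) = p n"
proof (intro exI conjI)
  let ?q = "\<lambda>i. if i \<le> a then p i else p (i + (b - a) - 1)"
  show "walk E ?q (n - (b - a) + 1)"
    unfolding walk_def
  proof (intro allI impI)
    fix i assume i: "i < n - (b - a) + 1"
    consider "i < a" | "i = a" | "i > a" by linarith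
    then show "E (?q i) (?q (Suc i))"
    proof cases
      case 2
      have "Suc a + (b - a) - 1 = b" using assms(2) by simp
      then show ?thesis using 2 assms(4) by simp
    next
      case 3
      have "E (p (i + (b - a) - 1)) (p (Suc (i + (b - a) - 1)))"
        using assms(1) i assms(2,3) by (auto simp: walk_def)
      moreover have "Suc (i + (b - a) - 1) = Suc i + (b - a) - 1" using assms(2) by simp
      ultimately show ?thesis using 3 by simp
    qed (use assms i in \<open>auto simp: walk_def\<close>)
  qed
  show "?q 0 = p 0" by simp
  show "?q (n - (b - a) + 1) = p n"
    using assms(2,3) by auto
qed

section \<open>Biconnected subgraphs and blocks\<close>

lemma biconnected_reachable_del:
  assumes "biconnected W F" "x \<in> W" "y \<in> W" "x \<noteq> z" "y \<noteq> z"
  shows "reachable (W - {z}) (del_vertex z F) x y"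
proof (cases "z \<in> W")
  case True
  then show ?thesis
    using assms unfolding biconnected_def connected_graph_def cut_vertex_def by blast
next
  case False
  have "reachable W F x y" using assms unfolding biconnected_def connected_graph_def by blast
  then show ?thesis
    by (rule reachable_mono) (use False in \<open>auto simp: del_vertex_def\<close>)
qed

lemma biconnectedI:
  assumes "connected_graph W F"
    and "\<And>z x y. x \<in> W - {z} \<Longrightarrow> y \<in> W - {z} \<Longrightarrow> reachable (W - {z}) (del_vertex z F) x y"
  shows "biconnected W F"
  using assms unfolding biconnected_def cut_vertex_def by blast

lemma biconnected_Un:
  assumes b1: "biconnected W1 F1" and b2: "biconnected W2 F2"
    and ab: "a \<in> W1 \<inter> W2" "b \<in> W1 \<inter> W2" "a \<noteq> b"
  shows "biconnected (W1 \<union> W2) (\<lambda>u w. F1 u w \<or> F2 u w)"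
proof (rule biconnectedI)
  let ?U = "W1 \<union> W2" and ?F = "\<lambda>u w. F1 u w \<or> F2 u w"
  have in_part: "reachable (?U - {z}) (del_vertex z ?F) x y"
    if "biconnected W' F'" "W' \<subseteq> ?U" "\<And>u w. F' u w \<Longrightarrow> ?F u w"
      "x \<in> W'" "y \<in> W'" "x \<noteq> z" "y \<noteq> z" for W' F' x y z
    using biconnected_reachable_del[OF that(1,4,5,6,7)]
    by (rule reachable_mono) (use that(2,3) in \<open>auto simp: del_vertex_def\<close>)
  have same_part: "reachable (?U - {z}) (del_vertex z ?F) x y"
    if "x \<noteq> z" "y \<noteq> z" "x \<in> W1 \<and> y \<in> W1 \<or> x \<in> W2 \<and> y \<in> W2" for x y z
    using that in_part[OF b1, of x y z] in_part[OF b2, of x y z] by blast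
  show "reachable (?U - {z}) (del_vertex z ?F) x y" if "x \<in> ?U - {z}" "y \<in> ?U - {z}" for x y z
  proof -
    obtain c where "c \<in> W1 \<inter> W2" "c \<noteq> z" using ab by blast
    then have "reachable (?U - {z}) (del_vertex z ?F) x c" "reachable (?U - {z}) (del_vertex z ?F) c y"
      using that same_part by blast+
    then show ?thesis by (rule reachable_trans)
  qed
  have reach_a: "reachable ?U ?F x a" "reachable ?U ?F a x" if "x \<in> ?U" for x
  proof -
    have "reachable W1 F1 x a \<and> reachable W1 F1 a x \<or> reachable W2 F2 x a \<and> reachable W2 F2 a x"
      using that ab b1 b2 unfolding biconnected_def connected_graph_def by blast
    then show "reachable ?U ?F x a" "reachable ?U ?F a x"
      by (auto elim: reachable_mono[of W1 F1] reachable_mono[of W2 F2])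
  qed
  show "connected_graph ?U ?F"
    unfolding connected_graph_def using ab reachable_trans[OF reach_a(1) reach_a(2)] by blast
qed

lemma subgraph_Un:
  "subgraph W1 F1 V E \<Longrightarrow> subgraph W2 F2 V E \<Longrightarrow> subgraph (W1 \<union> W2) (\<lambda>u w. F1 u w \<or> F2 u w) V E"
  unfolding subgraph_def simple_graph_def by simp

lemma block_subgraph: "is_block V E W F \<Longrightarrow> subgraph W F V E"
  unfolding is_block_def by blast

lemma block_biconnected: "is_block V E W F \<Longrightarrow> biconnected W F"
  unfolding is_block_def by blast

lemma block_absorbs:
  assumes blk: "is_block V E W F" and "subgraph W' F' V E" "biconnected W' F'"
    and "a \<in> W \<inter> W'" "b \<in> W \<inter> W'" "a \<noteq> b"
  shows "W' \<subseteq> W \<and> (\<forall>u w. F' u w \<longrightarrow> F u w)"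
proof -
  have "subgraph (W \<union> W') (\<lambda>u w. F u w \<or> F' u w) V E"
    using subgraph_Un[OF block_subgraph[OF blk] assms(2)] .
  moreover have "biconnected (W \<union> W') (\<lambda>u w. F u w \<or> F' u w)"
    using biconnected_Un[OF block_biconnected[OF blk] assms(3-6)] .
  ultimately have "W \<union> W' = W \<and> (\<lambda>u w. F u w \<or> F' u w) = F"
    using blk unfolding is_block_def by blast
  then show ?thesis by (metis Un_upper2)
qed

lemma blocks_eq:
  assumes "is_block V E W1 F1" "is_block V E W2 F2"
    and "a \<in> W1 \<inter> W2" "b \<in> W1 \<inter> W2" "a \<noteq> b"
  shows "W1 = W2 \<and> F1 = F2"
  using block_absorbs[OF assms(1) block_subgraph[OF assms(2)] block_biconnected[OF assms(2)]]
    block_absorbs[OF assms(2) block_subgraph[OF assms(1)] block_biconnected[OF assms(1)]] assms(3-5)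
  by (simp add: fun_eq_iff) blast

definition complete_on :: "'a set \<Rightarrow> 'a \<Rightarrow> 'a \<Rightarrow> bool" where
  "complete_on K x y \<longleftrightarrow> x \<in> K \<and> y \<in> K \<and> x \<noteq> y"

lemma reachable_complete_on: "x \<in> K \<Longrightarrow> y \<in> K \<Longrightarrow> reachable K (complete_on K) x y"
  by (cases "x = y") (simp_all add: reachable_refl reachable_edge complete_on_def)

lemma del_vertex_complete_on: "del_vertex z (complete_on K) = complete_on (K - {z})"
  unfolding del_vertex_def complete_on_def by (auto simp: fun_eq_iff)

lemma biconnected_complete_on:
  assumes "K \<noteq> {}"
  shows "biconnected K (complete_on K)"
proof (rule biconnectedI)
  show "connected_graph K (complete_on K)"
    unfolding connected_graph_def using assms by (simp add: reachable_complete_on)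
  show "reachable (K - {z}) (del_vertex z (complete_on K)) x y"
    if "x \<in> K - {z}" "y \<in> K - {z}" for z x y
    unfolding del_vertex_complete_on using that by (rule reachable_complete_on)
qed

lemma subgraph_complete_on:
  assumes "simple_graph V E" "K \<subseteq> V" "\<forall>x\<in>K. \<forall>y\<in>K. x \<noteq> y \<longrightarrow> E x y"
  shows "subgraph K (complete_on K) V E"
proof -
  have "finite K" using assms(1,2) finite_subset unfolding simple_graph_def by blast
  then show ?thesis using assms(2,3) unfolding subgraph_def simple_graph_def complete_on_def by auto
qed

lemma block_absorbs_clique:
  assumes sg: "simple_graph V E" and blk: "is_block V E W F"
    and K: "K \<subseteq> V" "\<forall>x\<in>K. \<forall>y\<in>K. x \<noteq> y \<longrightarrow> E x y"
    and ab: "a \<in> W \<inter> K" "b \<in> W \<inter> K" "a \<noteq> b"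
  shows "K \<subseteq> W" "\<forall>x\<in>K. \<forall>y\<in>K. x \<noteq> y \<longrightarrow> F x y"
proof -
  have "K \<subseteq> W \<and> (\<forall>u w. complete_on K u w \<longrightarrow> F u w)"
    using block_absorbs[OF blk subgraph_complete_on[OF sg K] biconnected_complete_on] ab by blast
  then show "K \<subseteq> W" "\<forall>x\<in>K. \<forall>y\<in>K. x \<noteq> y \<longrightarrow> F x y"
    unfolding complete_on_def by blast+
qed

lemma block_induced:
  assumes "simple_graph V E" "is_block V E W F" "u \<in> W" "w \<in> W" "E u w"
  shows "F u w"
proof -
  have "{u, w} \<subseteq> V" "u \<noteq> w" "E w u"
    using simple_graph_edgeD[OF assms(1,5)] by simp_all
  then show ?thesis
    using block_absorbs_clique(2)[OF assms(1,2), of "{u, w}" u w] assms(3-5) by simp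
qed

lemma block_exists:
  assumes sg: "simple_graph V E" and "subgraph W F V E" "biconnected W F"
  shows "\<exists>W' F'. is_block V E W' F' \<and> W \<subseteq> W' \<and> (\<forall>u w. F u w \<longrightarrow> F' u w)"
proof -
  let ?C = "{(W', F'). subgraph W' F' V E \<and> biconnected W' F'}"
  \<comment> \<open>finitely many candidates, as an edge relation inside V is determined by a subset of V \<times> V\<close>
  have "(W', F') \<in> Pow V \<times> (\<lambda>S x y. (x, y) \<in> S) ` Pow (V \<times> V)" if "subgraph W' F' V E" for W' F'
  proof -
    from that have "{(x, y). F' x y} \<in> Pow (V \<times> V)" "W' \<in> Pow V"
      unfolding subgraph_def simple_graph_def by auto
    moreover have "F' = (\<lambda>x y. (x, y) \<in> {(x, y). F' x y})" by simp
    ultimately show ?thesis by blast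
  qed
  then have "?C \<subseteq> Pow V \<times> (\<lambda>S x y. (x, y) \<in> S) ` Pow (V \<times> V)" by blast
  moreover have "finite V" using sg unfolding simple_graph_def by simp
  ultimately have "finite ?C"
    by (meson finite_Pow_iff finite_SigmaI finite_cartesian_product finite_imageI rev_finite_subset)
  moreover have "(W, F) \<in> ?C" using assms(2,3) by simp
  ultimately obtain B where B: "B \<in> ?C" "(W, F) \<le> B" and max: "\<forall>c\<in>?C. B \<le> c \<longrightarrow> B = c"
    using finite_has_maximal2 by blast
  obtain W' F' where B_def: "B = (W', F')" by (cases B)
  have "(W', F') = (W'', F'')"
    if "subgraph W'' F'' V E" "biconnected W'' F''" "W' \<subseteq> W''" "\<forall>u v. F' u v \<longrightarrow> F'' u v" for W'' F''
    using max[rule_format, of "(W'', F'')"] that B_def by (simp add: less_eq_prod_def le_fun_def)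
  then have "is_block V E W' F'"
    using B(1) B_def unfolding is_block_def by auto
  moreover have "W \<subseteq> W'" "\<forall>u w. F u w \<longrightarrow> F' u w"
    using B(2) B_def by (simp_all add: less_eq_prod_def le_fun_def)
  ultimately show ?thesis by blast
qed

definition cycle_edges :: "(nat \<Rightarrow> 'a) \<Rightarrow> nat \<Rightarrow> 'a \<Rightarrow> 'a \<Rightarrow> bool" where
  "cycle_edges c L u w \<longleftrightarrow>
     (\<exists>i. Suc i < L \<and> (u = c i \<and> w = c (Suc i) \<or> w = c i \<and> u = c (Suc i)))
     \<or> u = c (L - 1) \<and> w = c 0 \<or> w = c (L - 1) \<and> u = c 0"

lemma cycle_edges_sym: "cycle_edges c L u w \<Longrightarrow> cycle_edges c L w u"
  unfolding cycle_edges_def by blast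

lemma cycle_edges_step: "Suc i < L \<Longrightarrow> cycle_edges c L (c i) (c (Suc i))"
  unfolding cycle_edges_def by blast

lemma cycle_edges_last: "cycle_edges c L (c (L - 1)) (c 0)"
  unfolding cycle_edges_def by blast

lemma reachable_along:
  assumes "a \<le> b" "\<And>k. a \<le> k \<Longrightarrow> k \<le> b \<Longrightarrow> c k \<in> S" "\<And>k. a \<le> k \<Longrightarrow> k < b \<Longrightarrow> G (c k) (c (Suc k))"
  shows "reachable S G (c a) (c b)"
  using assms
proof (induction b)
  case (Suc b)
  show ?case
  proof (cases "a = Suc b")
    case False
    then have "reachable S G (c a) (c b)" "reachable S G (c b) (c (Suc b))"
      using Suc by (auto intro: reachable_edge)
    then show ?thesis by (rule reachable_trans)
  qed (use Suc.prems in \<open>simp add: reachable_refl\<close>)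
qed (simp add: reachable_refl)

lemma subgraph_cycle_edges:
  assumes sg: "simple_graph V E" and inj: "inj_on c {..<L}" and L: "3 \<le> L"
    and inV: "\<And>i. i < L \<Longrightarrow> c i \<in> V"
    and edges: "\<And>i. Suc i < L \<Longrightarrow> E (c i) (c (Suc i))" and last: "E (c (L - 1)) (c 0)"
  shows "subgraph (c ` {..<L}) (cycle_edges c L) V E"
proof -
  have ne: "c i \<noteq> c j" if "i < L" "j < L" "i \<noteq> j" for i j
    using inj that unfolding inj_on_def by blast
  have "u \<in> c ` {..<L} \<and> w \<in> c ` {..<L} \<and> u \<noteq> w \<and> E u w" if "cycle_edges c L u w" for u w
    using that unfolding cycle_edges_def
  proof (elim disjE exE conjE)
    fix i assume "Suc i < L" "u = c i" "w = c (Suc i)"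
    then show ?thesis using ne[of i "Suc i"] edges[of i] by auto
  next
    fix i assume "Suc i < L" "w = c i" "u = c (Suc i)"
    then show ?thesis using ne[of i "Suc i"] edges[of i] simple_graph_edgeD(4)[OF sg] by auto
  next
    assume "u = c (L - 1)" "w = c 0"
    then show ?thesis using ne[of "L - 1" 0] L last by auto
  next
    assume "w = c (L - 1)" "u = c 0"
    then show ?thesis using ne[of "L - 1" 0] L last simple_graph_edgeD(4)[OF sg] by auto
  qed
  then show ?thesis
    using inV cycle_edges_sym[of c L] unfolding subgraph_def simple_graph_def by blast
qed

lemma connected_cycle_edges:
  assumes "0 < L"
  shows "connected_graph (c ` {..<L}) (cycle_edges c L)"
  unfolding connected_graph_def
proof (intro conjI ballI)
  let ?W = "c ` {..<L}" and ?F = "cycle_edges c L"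
  have from_0: "reachable ?W ?F (c 0) (c j)" if "j < L" for j
    using that by (intro reachable_along) (auto intro: cycle_edges_step)
  show "?W \<noteq> {}" using assms by blast
  fix x y assume "x \<in> ?W" "y \<in> ?W"
  then obtain i j where "i < L" "j < L" "x = c i" "y = c j" by blast
  then show "reachable ?W ?F x y"
    using reachable_trans[OF reachable_sym[OF cycle_edges_sym from_0] from_0] by metis
qed

lemma reachable_cycle_edges_del_vertex:
  assumes L: "3 \<le> L" and inj: "inj_on c {..<L}" and x: "x \<in> c ` {..<L} - {w}" and y: "y \<in> c ` {..<L} - {w}"
  shows "reachable (c ` {..<L} - {w}) (del_vertex w (cycle_edges c L)) x y"
proof -
  let ?S = "c ` {..<L} - {w}" and ?G = "del_vertex w (cycle_edges c L)"
  have reach_sym: "reachable ?S ?G v u" if "reachable ?S ?G u v" for u v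
    using that by (rule reachable_sym[rotated]) (auto simp: del_vertex_def intro: cycle_edges_sym)
  have segment: "reachable ?S ?G (c a) (c b)" if "a \<le> b" "b < L" "\<forall>k. a \<le> k \<and> k \<le> b \<longrightarrow> c k \<noteq> w" for a b
    using that by (intro reachable_along) (auto simp: del_vertex_def intro: cycle_edges_step)
  \<comment> \<open>go round the cycle away from the deleted vertex\<close>
  obtain base where base: "\<And>k. k < L \<Longrightarrow> c k \<noteq> w \<Longrightarrow> reachable ?S ?G (c k) base"
  proof (cases "\<exists>z<L. c z = w")
    case True
    then obtain z where z: "z < L" "c z = w" by blast
    have cz: "c k \<noteq> w \<longleftrightarrow> k \<noteq> z" if "k < L" for k
      using inj_on_eq_iff[OF inj, of k z] z that by simp
    show ?thesis
    proof (cases "z = 0")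
      case True
      have "reachable ?S ?G (c k) (c 1)" if "k < L" "c k \<noteq> w" for k
        using reach_sym[OF segment[of 1 k]] that cz True by auto
      then show ?thesis by (rule that)
    next
      case False
      have "reachable ?S ?G (c k) (c 0)" if k: "k < L" "c k \<noteq> w" for k
      proof (cases "k < z")
        case True
        then show ?thesis using reach_sym[OF segment[of 0 k]] k cz by auto
      next
        case False
        have "c j \<noteq> w" if "k \<le> j" "j \<le> L - 1" for j
          using that False k L cz[of j] by auto
        then have "reachable ?S ?G (c k) (c (L - 1))"
          using segment[of k "L - 1"] k by auto
        moreover have "reachable ?S ?G (c (L - 1)) (c 0)"
          using \<open>z \<noteq> 0\<close> False k cz L cycle_edges_last[of c L]
          by (intro reachable_edge) (auto simp: del_vertex_def)
        ultimately show ?thesis by (rule reachable_trans)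
      qed
      then show ?thesis by (rule that)
    qed
  next
    case False
    have "reachable ?S ?G (c k) (c 0)" if "k < L" for k
      using reach_sym[OF segment[of 0 k]] that False by auto
    then show ?thesis using that by blast
  qed
  obtain i j where "i < L" "j < L" "x = c i" "y = c j" "c i \<noteq> w" "c j \<noteq> w" using x y by blast
  then show ?thesis
    using reachable_trans[OF base reach_sym[OF base]] by metis
qed

lemma biconnected_cycle_edges:
  "3 \<le> L \<Longrightarrow> inj_on c {..<L} \<Longrightarrow> biconnected (c ` {..<L}) (cycle_edges c L)"
  by (rule biconnectedI[OF connected_cycle_edges reachable_cycle_edges_del_vertex]) simp_all

lemma cycle_graph_simple: "is_cycle_graph W F \<Longrightarrow> simple_graph W F"
  unfolding is_cycle_graph_def by simp

lemma cycle_graph_degree: "is_cycle_graph W F \<Longrightarrow> x \<in> W \<Longrightarrow> card {w \<in> W. F x w} = 2"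
  unfolding is_cycle_graph_def degree_def by simp

lemma cycle_graph_nbrs:
  assumes cyc: "is_cycle_graph W F" and "x \<in> W" "F x p" "F x q" "p \<noteq> q"
  shows "{w \<in> W. F x w} = {p, q}"
proof -
  have sg: "simple_graph W F" using cyc by (rule cycle_graph_simple)
  have "finite {w \<in> W. F x w}" using sg unfolding simple_graph_def by simp
  moreover have "{p, q} \<subseteq> {w \<in> W. F x w}"
    using simple_graph_edgeD(2)[OF sg] assms(3,4) by simp
  moreover have "card {p, q} = card {w \<in> W. F x w}"
    using cycle_graph_degree[OF assms(1,2)] assms(5) by simp
  ultimately show ?thesis by (metis card_subset_eq)
qed

lemma long_cycle_graph_nbrs_nonadjacent:
  assumes cyc: "is_cycle_graph W F" and c4: "4 \<le> card W"
    and ua: "F u a" and ub: "F u b" and ab: "a \<noteq> b"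
  shows "\<not> F a b"
proof
  assume fab: "F a b"
  have sg: "simple_graph W F" using cyc by (rule cycle_graph_simple)
  note s1 = simple_graph_edgeD[OF sg ua] and s2 = simple_graph_edgeD[OF sg ub]
    and s3 = simple_graph_edgeD[OF sg fab]
  let ?T = "{u, a, b}"
  \<comment> \<open>the triangle would be a whole component of the 2-regular graph\<close>
  have "{w \<in> W. F y w} \<subseteq> ?T" if "y \<in> ?T" for y
    using that cycle_graph_nbrs[OF cyc s1(1) ua ub ab] cycle_graph_nbrs[OF cyc s1(2) s1(4) fab]
      cycle_graph_nbrs[OF cyc s2(2) s2(4) s3(4)] s1(3) s2(3) by auto
  then have closed: "z \<in> ?T" if "y \<in> ?T" "z \<in> W" "F y z" for y z
    using that by blast
  have "w \<in> ?T" if "w \<in> W" for w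
  proof -
    have "(\<lambda>x y. x \<in> W \<and> y \<in> W \<and> F x y)\<^sup>*\<^sup>* u w"
      using cyc s1(1) that unfolding is_cycle_graph_def connected_graph_def reachable_def by simp
    then show ?thesis
    proof (induction rule: rtranclp_induct)
      case (step y z)
      then show ?case using closed by blast
    qed simp
  qed
  then have "card W \<le> card ?T" by (simp add: card_mono subsetI)
  also have "card ?T \<le> 3" by (simp add: card_insert_le_m1)
  finally show False using c4 by simp
qed

lemma cycle_graph_long_if_nbrs_nonadjacent:
  assumes cyc: "is_cycle_graph W F" and ua: "F u a" and ub: "F u b" and ab: "a \<noteq> b" and nab: "\<not> F a b"
  shows "4 \<le> card W"
proof (rule ccontr)
  assume "\<not> 4 \<le> card W"
  moreover have "3 \<le> card W" using cyc unfolding is_cycle_graph_def by simp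
  ultimately have c3: "card W = 3" by simp
  have sg: "simple_graph W F" using cyc by (rule cycle_graph_simple)
  note s1 = simple_graph_edgeD[OF sg ua] and s2 = simple_graph_edgeD[OF sg ub]
  have "{u, a, b} \<subseteq> W" "card {u, a, b} = 3" using s1 s2 ab by simp_all
  moreover have "finite W" using sg unfolding simple_graph_def by simp
  ultimately have W: "W = {u, a, b}"
    using card_subset_eq c3 by metis
  have "{w \<in> W. F a w} \<subseteq> {u, b}"
    using W simple_graph_edgeD(3)[OF sg] by auto
  moreover have "card {u, b} = 2" using s2(3) by simp
  ultimately have "{w \<in> W. F a w} = {u, b}"
    using card_subset_eq[of "{u, b}"] cycle_graph_degree[OF cyc s1(2)] by simp
  then show False using nab by blast
qed

lemma cycle_graph_card_3_complete:
  assumes cyc: "is_cycle_graph W F" and c3: "card W = 3"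
  shows "is_complete_graph W F"
  unfolding is_complete_graph_def
proof (intro conjI ballI impI)
  show sg: "simple_graph W F" using cyc by (rule cycle_graph_simple)
  fix x y assume x: "x \<in> W" and y: "y \<in> W" and xy: "x \<noteq> y"
  have fin: "finite W" using sg unfolding simple_graph_def by simp
  have "{w \<in> W. F x w} \<subseteq> W - {x}" using simple_graph_edgeD(3)[OF sg] by blast
  moreover have "card {w \<in> W. F x w} = card (W - {x})"
    using cycle_graph_degree[OF cyc x] c3 x fin by simp
  ultimately have "{w \<in> W. F x w} = W - {x}" using card_subset_eq fin by (metis finite_Diff)
  then show "F x y" using y xy by blast
qed

lemma complete_cycle_graph_card_le_3:
  assumes comp: "is_complete_graph W F" and cyc: "is_cycle_graph W F"
  shows "card W \<le> 3"
proof -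
  have sg: "simple_graph W F" using cyc by (rule cycle_graph_simple)
  obtain u where u: "u \<in> W" using cyc unfolding is_cycle_graph_def connected_graph_def by blast
  have "{w \<in> W. F u w} = W - {u}"
  proof
    show "{w \<in> W. F u w} \<subseteq> W - {u}" using simple_graph_edgeD(3)[OF sg] by blast
    show "W - {u} \<subseteq> {w \<in> W. F u w}" using comp u unfolding is_complete_graph_def by auto
  qed
  then have "card W - 1 = 2"
    using cycle_graph_degree[OF cyc u] u sg unfolding simple_graph_def by simp
  then show ?thesis by simp
qed

lemma one_perfect_orientationD:
  assumes "one_perfect_orientation V E D"
  shows "\<And>u w. D u w \<Longrightarrow> E u w" "\<And>u w. E u w \<Longrightarrow> D u w \<or> D w u" "\<And>u w. D u w \<Longrightarrow> \<not> D w u"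
    "\<And>v x y. v \<in> V \<Longrightarrow> D v x \<Longrightarrow> D v y \<Longrightarrow> x \<noteq> y \<Longrightarrow> E x y"
  using assms unfolding one_perfect_orientation_def orientation_def by blast+

lemma card_arcs_half:
  assumes sg: "simple_graph W F"
    and total: "\<And>x y. F x y \<Longrightarrow> D x y \<or> D y x" and asym: "\<And>x y. D x y \<Longrightarrow> \<not> D y x"
  defines "A \<equiv> Sigma W (\<lambda>x. {w \<in> W. F x w})"
  shows "card A = 2 * card {p \<in> A. D (fst p) (snd p)}"
proof -
  let ?Dp = "{p \<in> A. D (fst p) (snd p)}"
  have "A = ?Dp \<union> prod.swap ` ?Dp"
  proof
    show "A \<subseteq> ?Dp \<union> prod.swap ` ?Dp"
    proof
      fix p assume "p \<in> A"
      then obtain x w where p: "p = (x, w)" "x \<in> W" "w \<in> W" "F x w" unfolding A_def by blast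
      then consider "D x w" | "D w x" using total by blast
      then show "p \<in> ?Dp \<union> prod.swap ` ?Dp"
      proof cases
        case 2
        then have "(w, x) \<in> ?Dp" using p simple_graph_edgeD(4)[OF sg p(4)] unfolding A_def by simp
        then show ?thesis using p by force
      qed (use p \<open>p \<in> A\<close> in simp)
    qed
    show "?Dp \<union> prod.swap ` ?Dp \<subseteq> A"
      using simple_graph_edgeD(4)[OF sg] unfolding A_def by auto
  qed
  moreover have "?Dp \<inter> prod.swap ` ?Dp = {}" using asym by auto
  moreover have "finite A" using sg unfolding A_def simple_graph_def by simp
  ultimately have "card A = card ?Dp + card (prod.swap ` ?Dp)"
    by (metis (no_types, lifting) card_Un_disjoint finite_Un)
  also have "card (prod.swap ` ?Dp) = card ?Dp" by (rule card_image) simp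
  finally show ?thesis by simp
qed

text \<open>In an orientation of a 2-regular graph there are as many arcs as vertices, so if no vertex
  has two out-neighbours then every vertex has exactly one.\<close>

lemma regular_2_orientation_out_arc:
  assumes sg: "simple_graph W F" and reg: "\<And>x. x \<in> W \<Longrightarrow> card {w \<in> W. F x w} = 2"
    and total: "\<And>x y. F x y \<Longrightarrow> D x y \<or> D y x" and asym: "\<And>x y. D x y \<Longrightarrow> \<not> D y x"
    and out_le: "\<And>x a b. x \<in> W \<Longrightarrow> F x a \<Longrightarrow> F x b \<Longrightarrow> D x a \<Longrightarrow> D x b \<Longrightarrow> a = b"
    and u: "u \<in> W"
  shows "\<exists>w. F u w \<and> D u w"
proof -
  let ?A = "Sigma W (\<lambda>x. {w \<in> W. F x w})"
  let ?Dp = "{p \<in> ?A. D (fst p) (snd p)}"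
  have finW: "finite W" using sg unfolding simple_graph_def by simp
  have "card ?A = (\<Sum>x\<in>W. card {w \<in> W. F x w})" using finW by simp
  also have "\<dots> = 2 * card W" using reg by simp
  finally have "card ?Dp = card W" using card_arcs_half[OF sg total asym] by simp
  moreover have "inj_on fst ?Dp"
    using out_le by (auto intro!: inj_onI)
  ultimately have "card (fst ` ?Dp) = card W" by (simp add: card_image)
  moreover have "fst ` ?Dp \<subseteq> W" by auto
  ultimately have "fst ` ?Dp = W" using card_subset_eq[OF finW] by blast
  then show ?thesis using u by force
qed

section \<open>At most one long cycle block in a 1-perfectly orientable graph\<close>

definition long_cycle_block :: "'a set \<Rightarrow> ('a \<Rightarrow> 'a \<Rightarrow> bool) \<Rightarrow> 'a set \<Rightarrow> ('a \<Rightarrow> 'a \<Rightarrow> bool) \<Rightarrow> bool" where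
  "long_cycle_block V E W F \<longleftrightarrow> is_block V E W F \<and> is_cycle_graph W F \<and> 4 \<le> card W"

definition at_most_one_long_cycle_block :: "'a set \<Rightarrow> ('a \<Rightarrow> 'a \<Rightarrow> bool) \<Rightarrow> bool" where
  "at_most_one_long_cycle_block V E \<longleftrightarrow>
     (\<forall>W1 F1 W2 F2. long_cycle_block V E W1 F1 \<longrightarrow> long_cycle_block V E W2 F2 \<longrightarrow> W1 = W2 \<and> F1 = F2)"

lemma long_cycle_block_out_arc:
  assumes sg: "simple_graph V E" and lcb: "long_cycle_block V E W F"
    and opo: "one_perfect_orientation V E D" and u: "u \<in> W"
  shows "\<exists>w. F u w \<and> D u w"
proof -
  note o = one_perfect_orientationD[OF opo]
  have blk: "is_block V E W F" and cyc: "is_cycle_graph W F" and c4: "4 \<le> card W"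
    using lcb unfolding long_cycle_block_def by simp_all
  have sub: "subgraph W F V E" using blk by (rule block_subgraph)
  have out_le: "a = b" if "x \<in> W" "F x a" "F x b" "D x a" "D x b" for x a b
  proof (rule ccontr)
    assume "a \<noteq> b"
    moreover have "x \<in> V" using sub that(1) unfolding subgraph_def by blast
    ultimately have "E a b" using o(4) that(4,5) by blast
    moreover have "a \<in> W" "b \<in> W"
      using simple_graph_edgeD(2)[OF cycle_graph_simple[OF cyc]] that(2,3) by blast+
    ultimately have "F a b" using block_induced[OF sg blk] by blast
    then show False
      using long_cycle_graph_nbrs_nonadjacent[OF cyc c4 that(2,3) \<open>a \<noteq> b\<close>] by simp
  qed
  have "F x y \<Longrightarrow> D x y \<or> D y x" for x y
    using o(2) sub unfolding subgraph_def by blast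
  then show ?thesis
    using regular_2_orientation_out_arc[OF cycle_graph_simple[OF cyc] cycle_graph_degree[OF cyc]]
      o(3) out_le u by blast
qed

text \<open>An edge leaving a long cycle block is oriented towards the block: otherwise its end in the
  block would have two out-neighbours, which must be adjacent, and the resulting triangle would
  be absorbed by the block.\<close>

lemma long_cycle_block_in_arc:
  assumes sg: "simple_graph V E" and lcb: "long_cycle_block V E W F"
    and opo: "one_perfect_orientation V E D" and u: "u \<in> W" and x: "x \<notin> W" and ux: "E u x"
  shows "D x u"
proof (rule ccontr)
  assume "\<not> D x u"
  note o = one_perfect_orientationD[OF opo]
  have blk: "is_block V E W F" using lcb unfolding long_cycle_block_def by simp
  have sub: "subgraph W F V E" using blk by (rule block_subgraph)
  have "D u x" using o(2)[OF ux] \<open>\<not> D x u\<close> by blast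
  obtain a where a: "F u a" "D u a" using long_cycle_block_out_arc[OF sg lcb opo u] by blast
  have sgW: "simple_graph W F" and "E u a" "u \<in> V"
    using a(1) sub u unfolding subgraph_def by blast+
  have "a \<in> W" "u \<noteq> a" using simple_graph_edgeD[OF sgW a(1)] by simp_all
  then have "E a x" using o(4)[OF \<open>u \<in> V\<close> a(2) \<open>D u x\<close>] x by blast
  have K: "{u, a, x} \<subseteq> V" "\<forall>p\<in>{u, a, x}. \<forall>q\<in>{u, a, x}. p \<noteq> q \<longrightarrow> E p q"
    using simple_graph_edgeD[OF sg \<open>E u a\<close>] simple_graph_edgeD[OF sg \<open>E a x\<close>]
      simple_graph_edgeD[OF sg ux] \<open>E u a\<close> \<open>E a x\<close> ux by auto
  have "{u, a, x} \<subseteq> W"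
    by (rule block_absorbs_clique(1)[OF sg blk K, of u a]) (use u \<open>a \<in> W\<close> \<open>u \<noteq> a\<close> in auto)
  then show False using x by simp
qed

lemma walk_shortcut:
  assumes "walk E p n" "j + 2 \<le> n" "p j = p (j + 2) \<or> E (p j) (p (j + 2))"
  shows "\<exists>m q. m < n \<and> walk E q m \<and> q 0 = p 0 \<and> q m = p n"
  using assms(3)
proof
  assume "p j = p (j + 2)"
  then obtain q where "walk E q (n - 2)" "q 0 = p 0" "q (n - 2) = p n"
    using walk_skip_loop[OF assms(1), of j "j + 2"] assms(2) by auto
  moreover have "n - 2 < n" using assms(2) by simp
  ultimately show ?thesis by blast
next
  assume "E (p j) (p (j + 2))"
  moreover have "n - (j + 2 - j) + 1 = n - 1" using assms(2) by simp
  ultimately obtain q where "walk E q (n - 1)" "q 0 = p 0" "q (n - 1) = p n"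
    using walk_skip_chord[OF assms(1), of j "j + 2"] assms(2) by auto
  moreover have "n - 1 < n" using assms(2) by simp
  ultimately show ?thesis by blast
qed

lemma shortest_walk_between:
  assumes sg: "simple_graph V E" and conn: "connected_graph V E"
    and "A \<subseteq> V" "B \<subseteq> V" "A \<noteq> {}" "B \<noteq> {}"
  obtains p n where "p 0 \<in> A" "p n \<in> B" "walk E p n"
    "\<forall>m<n. \<forall>q. q 0 \<in> A \<longrightarrow> q m \<in> B \<longrightarrow> \<not> walk E q m"
proof -
  let ?P = "\<lambda>n. \<exists>p. p 0 \<in> A \<and> p n \<in> B \<and> walk E p n"
  obtain a b where "a \<in> A" "b \<in> B" using assms(5,6) by blast
  moreover have "a \<in> V" "b \<in> V" using calculation assms(3,4) by blast+
  ultimately obtain p n where "p 0 = a" "p n = b" "walk E p n"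
    using connected_graph_reachable[OF conn] reachable_iff_walk[OF sg] by metis
  then have "\<exists>n. ?P n" using \<open>a \<in> A\<close> \<open>b \<in> B\<close> by blast
  then show ?thesis using exists_least_iff[of ?P] that by metis
qed

lemma walk_orientation_switch:
  assumes "walk E p n" "D (p 1) (p 0)" "D (p (n - 1)) (p n)"
    and total: "\<And>u w. E u w \<Longrightarrow> D u w \<or> D w u" and asym: "\<And>u w. D u w \<Longrightarrow> \<not> D w u"
  shows "\<exists>j. j + 2 \<le> n \<and> D (p (Suc j)) (p j) \<and> D (p (Suc j)) (p (j + 2))"
proof -
  let ?fwd = "\<lambda>j. D (p j) (p (Suc j))"
  have "n \<noteq> 0"
  proof
    assume "n = 0"
    then show False using assms(3) asym by auto
  qed
  then have "?fwd (n - 1)" "\<not> ?fwd 0" using assms(2,3) asym by auto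
  then obtain j where j: "j < n - 1" "\<not> ?fwd j" "?fwd (Suc j)"
    using ex_least_nat_less[of ?fwd "n - 1"] by blast
  moreover have "E (p j) (p (Suc j))" using assms(1) j(1) unfolding walk_def by simp
  ultimately have "D (p (Suc j)) (p j)" using total by blast
  with j show ?thesis by (intro exI[of _ j]) (simp add: numeral_2_eq_2)
qed

lemma long_cycle_blocks_meet:
  assumes sg: "simple_graph V E" and conn: "connected_graph V E" and opo: "one_perfect_orientation V E D"
    and lcb1: "long_cycle_block V E W1 F1" and lcb2: "long_cycle_block V E W2 F2"
  shows "W1 \<inter> W2 \<noteq> {}"
proof
  assume disj: "W1 \<inter> W2 = {}"
  note o = one_perfect_orientationD[OF opo]
  have "W1 \<subseteq> V" "W2 \<subseteq> V"
    using lcb1 lcb2 block_subgraph unfolding long_cycle_block_def subgraph_def by blast+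
  moreover have "W1 \<noteq> {}" "W2 \<noteq> {}"
    using lcb1 lcb2 unfolding long_cycle_block_def by auto
  ultimately obtain p n where p: "p 0 \<in> W1" "p n \<in> W2" "walk E p n"
    and min: "\<forall>m<n. \<forall>q. q 0 \<in> W1 \<longrightarrow> q m \<in> W2 \<longrightarrow> \<not> walk E q m"
    by (rule shortest_walk_between[OF sg conn])
  have "n \<noteq> 0" using p disj by (cases n) auto
  have edge: "E (p i) (p (Suc i))" if "i < n" for i using p(3) that unfolding walk_def by blast
  have "p 1 \<notin> W1"
    using min[rule_format, of "n - 1" "\<lambda>j. p (j + 1)"] walk_drop[OF p(3), of 1] p(2) \<open>n \<noteq> 0\<close> by auto
  then have first: "D (p 1) (p 0)"
    using long_cycle_block_in_arc[OF sg lcb1 opo p(1)] edge[of 0] \<open>n \<noteq> 0\<close> by simp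
  have "p (n - 1) \<notin> W2"
    using min[rule_format, of "n - 1" p] walk_take[OF p(3)] p(1) \<open>n \<noteq> 0\<close> by auto
  then have last: "D (p (n - 1)) (p n)"
    using long_cycle_block_in_arc[OF sg lcb2 opo p(2)] edge[of "n - 1"] simple_graph_edgeD(4)[OF sg]
      \<open>n \<noteq> 0\<close> by simp
  obtain j where j: "j + 2 \<le> n" "D (p (Suc j)) (p j)" "D (p (Suc j)) (p (j + 2))"
    using walk_orientation_switch[of E p n D, OF p(3) first last o(2) o(3)] by blast
  have "p (Suc j) \<in> V" using simple_graph_edgeD(1)[OF sg edge[of "Suc j"]] j(1) by simp
  then have "p j = p (j + 2) \<or> E (p j) (p (j + 2))" using o(4)[OF _ j(2,3)] by blast
  then show False using walk_shortcut[OF p(3) j(1)] min p(1,2) by metis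
qed

lemma long_cycle_block_unique:
  assumes sg: "simple_graph V E" and conn: "connected_graph V E" and opo: "one_perfect_orientation V E D"
    and lcb1: "long_cycle_block V E W1 F1" and lcb2: "long_cycle_block V E W2 F2"
  shows "W1 = W2 \<and> F1 = F2"
proof -
  obtain v where v: "v \<in> W1" "v \<in> W2"
    using long_cycle_blocks_meet[OF assms] by blast
  obtain b where b: "F2 v b" "D v b" using long_cycle_block_out_arc[OF sg lcb2 opo v(2)] by blast
  have blk2: "is_block V E W2 F2" using lcb2 unfolding long_cycle_block_def by simp
  have sgW2: "simple_graph W2 F2" and "E v b"
    using block_subgraph[OF blk2] b(1) unfolding subgraph_def by blast+
  have "b \<in> W2" "v \<noteq> b" using simple_graph_edgeD[OF sgW2 b(1)] by simp_all
  moreover have "b \<in> W1"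
    using long_cycle_block_in_arc[OF sg lcb1 opo v(1) _ \<open>E v b\<close>] one_perfect_orientationD(3)[OF opo b(2)]
    by blast
  ultimately show ?thesis
    using blocks_eq[of V E W1 F1 W2 F2 v b] lcb1 blk2 v unfolding long_cycle_block_def by blast
qed

theorem at_most_one_long_cycle_block_if_one_perfectly_orientable:
  assumes "simple_graph V E" "connected_graph V E" "one_perfectly_orientable V E"
  shows "at_most_one_long_cycle_block V E"
  using assms long_cycle_block_unique
  unfolding one_perfectly_orientable_def at_most_one_long_cycle_block_def by metis

definition outdeg1_orientation :: "'a set \<Rightarrow> ('a \<Rightarrow> 'a \<Rightarrow> bool) \<Rightarrow> ('a \<Rightarrow> 'a \<Rightarrow> bool) \<Rightarrow> bool" where
  "outdeg1_orientation V E D \<longleftrightarrow> orientation V E D \<and> (\<forall>u a b. D u a \<and> D u b \<longrightarrow> a = b)"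

lemma outdeg1_orientation_one_perfect: "outdeg1_orientation V E D \<Longrightarrow> one_perfect_orientation V E D"
  unfolding outdeg1_orientation_def one_perfect_orientation_def by blast

lemma outdeg1_orientation_extend:
  assumes sg: "simple_graph V E" and D': "outdeg1_orientation (V - {z}) (del_vertex z E) D'"
    and S: "\<forall>s\<in>S. E z s \<and> (\<forall>w. \<not> D' s w)"
    and rest: "\<forall>a b. E z a \<longrightarrow> E z b \<longrightarrow> a \<notin> S \<longrightarrow> b \<notin> S \<longrightarrow> a = b"
  shows "outdeg1_orientation V E (\<lambda>u w. D' u w \<or> u \<in> S \<and> w = z \<or> u = z \<and> E z w \<and> w \<notin> S)"
proof -
  have o1: "\<And>u w. D' u w \<Longrightarrow> E u w \<and> u \<noteq> z \<and> w \<noteq> z"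
    and o2: "\<And>u w. del_vertex z E u w \<Longrightarrow> D' u w \<or> D' w u"
    and o3: "\<And>u w. D' u w \<Longrightarrow> \<not> D' w u" and o4: "\<And>u a b. D' u a \<Longrightarrow> D' u b \<Longrightarrow> a = b"
    using D' unfolding outdeg1_orientation_def orientation_def del_vertex_def by blast+
  have Esym: "\<And>u w. E u w \<Longrightarrow> E w u" and Eirr: "\<And>u. \<not> E u u"
    using simple_graph_edgeD[OF sg] by blast+
  show ?thesis
    unfolding outdeg1_orientation_def orientation_def
  proof (intro conjI allI impI)
    fix u w assume "D' u w \<or> u \<in> S \<and> w = z \<or> u = z \<and> E z w \<and> w \<notin> S"
    then show "E u w" using o1 S Esym by blast
  next
    fix u w assume e: "E u w"
    show "(D' u w \<or> u \<in> S \<and> w = z \<or> u = z \<and> E z w \<and> w \<notin> S)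
      \<or> (D' w u \<or> w \<in> S \<and> u = z \<or> w = z \<and> E z u \<and> u \<notin> S)"
    proof (cases "u = z \<or> w = z")
      case True
      then show ?thesis using e Esym by blast
    next
      case False
      then show ?thesis using o2 e unfolding del_vertex_def by blast
    qed
  next
    fix u w assume "D' u w \<or> u \<in> S \<and> w = z \<or> u = z \<and> E z w \<and> w \<notin> S"
    then show "\<not> (D' w u \<or> w \<in> S \<and> u = z \<or> w = z \<and> E z u \<and> u \<notin> S)"
      using o1 o3 Eirr S by blast
  next
    fix u a b
    assume "(D' u a \<or> u \<in> S \<and> a = z \<or> u = z \<and> E z a \<and> a \<notin> S)
      \<and> (D' u b \<or> u \<in> S \<and> b = z \<or> u = z \<and> E z b \<and> b \<notin> S)"
    then show "a = b"
      by (elim conjE disjE) (use o1 o4 S rest Eirr in blast)+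
  qed
qed

lemma degree_del_vertex_le:
  "finite V \<Longrightarrow> y \<noteq> z \<Longrightarrow> degree (V - {z}) (del_vertex z E) y \<le> degree V E y"
  unfolding degree_def del_vertex_def by (auto intro: card_mono)

lemma degree_del_vertex_nbr:
  assumes sg: "simple_graph V E" and "E z y"
  shows "degree (V - {z}) (del_vertex z E) y = degree V E y - 1"
proof -
  have "{w \<in> V - {z}. del_vertex z E y w} = {w \<in> V. E y w} - {z}"
    using simple_graph_edgeD(3)[OF sg assms(2)] unfolding del_vertex_def by auto
  moreover have "z \<in> {w \<in> V. E y w}" using simple_graph_edgeD[OF sg assms(2)] by simp
  moreover have "finite V" using sg unfolding simple_graph_def by simp
  ultimately show ?thesis unfolding degree_def by simp
qed

lemma degree_le_1_cases:
  assumes "finite V" "degree V E z \<le> 1"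
  obtains "\<forall>w\<in>V. \<not> E z w" | y where "y \<in> V" "E z y" "\<forall>w\<in>V. E z w \<longrightarrow> w = y"
  using assms card_le_Suc0_iff_eq[of "{w \<in> V. E z w}"] unfolding degree_def by auto

lemma outdeg1_orientation_del_vertex_sink:
  "outdeg1_orientation (V - {z}) (del_vertex z E) D \<Longrightarrow> \<not> D z w"
  unfolding outdeg1_orientation_def orientation_def del_vertex_def by blast

definition leaf_sink_orientable :: "'a set \<Rightarrow> ('a \<Rightarrow> 'a \<Rightarrow> bool) \<Rightarrow> bool" where
  "leaf_sink_orientable V E \<longleftrightarrow>
     (\<forall>z\<in>V. degree V E z \<le> 1 \<longrightarrow> (\<exists>D. outdeg1_orientation V E D \<and> (\<forall>w. \<not> D z w)))"

lemma leaf_sink_orientable_step: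
  assumes sg: "simple_graph V E" and deg: "\<forall>u\<in>V. degree V E u \<le> 2"
    and z: "z \<in> V" "degree V E z \<le> 1"
    and D0: "\<exists>D. outdeg1_orientation (V - {z}) (del_vertex z E) D"
    and sinks: "leaf_sink_orientable (V - {z}) (del_vertex z E)"
  shows "\<exists>D. outdeg1_orientation V E D \<and> (\<forall>w. \<not> D z w)"
proof -
  have "finite V" using sg unfolding simple_graph_def by simp
  then show ?thesis
    using z(2)
  proof (cases rule: degree_le_1_cases)
    case 1
    then have "\<forall>w. \<not> E z w" using simple_graph_edgeD(2)[OF sg] by blast
    moreover obtain D' where D': "outdeg1_orientation (V - {z}) (del_vertex z E) D'" using D0 by blast
    ultimately show ?thesis
      using outdeg1_orientation_extend[OF sg, of z D' "{}"] outdeg1_orientation_del_vertex_sink[OF D']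
      by auto
  next
    case (2 y)
    have "degree V E y \<le> 2" using deg 2(1) by blast
    then have "degree (V - {z}) (del_vertex z E) y \<le> 1"
      unfolding degree_del_vertex_nbr[OF sg 2(2)] by simp
    moreover have "y \<in> V - {z}" using 2(1) simple_graph_edgeD(3)[OF sg 2(2)] by simp
    ultimately obtain D' where D': "outdeg1_orientation (V - {z}) (del_vertex z E) D'" "\<forall>w. \<not> D' y w"
      using sinks unfolding leaf_sink_orientable_def by blast
    have only_y: "E z w \<Longrightarrow> w = y" for w using 2(3) simple_graph_edgeD(2)[OF sg, of z w] by blast
    have "outdeg1_orientation V E (\<lambda>u w. D' u w \<or> u \<in> {y} \<and> w = z \<or> u = z \<and> E z w \<and> w \<notin> {y})"
      by (rule outdeg1_orientation_extend[OF sg D'(1)]) (use D'(2) 2(2) only_y in blast)+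
    then show ?thesis
      using only_y outdeg1_orientation_del_vertex_sink[OF D'(1)] simple_graph_edgeD(3)[OF sg 2(2)] by blast
  qed
qed

lemma outdeg1_orientation_regular_step:
  assumes sg: "simple_graph V E" and deg: "\<forall>u\<in>V. degree V E u \<le> 2"
    and u: "u \<in> V" "degree V E u = 2"
    and sinks: "leaf_sink_orientable (V - {u}) (del_vertex u E)"
  shows "\<exists>D. outdeg1_orientation V E D"
proof -
  obtain a b where ab: "{w \<in> V. E u w} = {a, b}" "a \<noteq> b"
    using u(2) unfolding degree_def by (auto simp: card_2_iff)
  then have "E u b" "b \<in> V" by auto
  have "degree V E b \<le> 2" using deg \<open>b \<in> V\<close> by blast
  then have "degree (V - {u}) (del_vertex u E) b \<le> 1"
    unfolding degree_del_vertex_nbr[OF sg \<open>E u b\<close>] by simp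
  moreover have "b \<in> V - {u}" using \<open>b \<in> V\<close> simple_graph_edgeD(3)[OF sg \<open>E u b\<close>] by simp
  ultimately obtain D' where D': "outdeg1_orientation (V - {u}) (del_vertex u E) D'" "\<forall>w. \<not> D' b w"
    using sinks unfolding leaf_sink_orientable_def by blast
  have "\<forall>x y. E u x \<longrightarrow> E u y \<longrightarrow> x \<notin> {b} \<longrightarrow> y \<notin> {b} \<longrightarrow> x = y"
  proof (intro allI impI)
    fix x y assume "E u x" "E u y" "x \<notin> {b}" "y \<notin> {b}"
    then have "x \<in> {a, b}" "y \<in> {a, b}"
      using ab(1) simple_graph_edgeD(2)[OF sg] by blast+
    then show "x = y" using \<open>x \<notin> {b}\<close> \<open>y \<notin> {b}\<close> by blast
  qed
  then have "outdeg1_orientation V E (\<lambda>x w. D' x w \<or> x \<in> {b} \<and> w = u \<or> x = u \<and> E u w \<and> w \<notin> {b})"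
    using outdeg1_orientation_extend[OF sg D'(1)] D'(2) \<open>E u b\<close> by blast
  then show ?thesis by blast
qed

text \<open>The stronger claim that a vertex of degree at most one can be made a sink is what lets a path
  or a cycle be oriented one vertex at a time.\<close>

lemma outdeg1_orientation_exists_sink:
  assumes "simple_graph V E" "\<forall>u\<in>V. degree V E u \<le> 2"
  shows "leaf_sink_orientable V E \<and> (\<exists>D. outdeg1_orientation V E D)"
  using assms
proof (induction "card V" arbitrary: V E rule: less_induct)
  case less
  note sg = less.prems(1) and deg = less.prems(2)
  have finV: "finite V" using sg unfolding simple_graph_def by simp
  have IH: "leaf_sink_orientable (V - {z}) (del_vertex z E) \<and>
      (\<exists>D. outdeg1_orientation (V - {z}) (del_vertex z E) D)" if "z \<in> V" for z
  proof (rule less.hyps)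
    show "card (V - {z}) < card V" using finV that by (rule card_Diff1_less)
    show "simple_graph (V - {z}) (del_vertex z E)" using sg by (rule simple_graph_del_vertex)
    show "\<forall>u\<in>V - {z}. degree (V - {z}) (del_vertex z E) u \<le> 2"
    proof
      fix u assume "u \<in> V - {z}"
      then show "degree (V - {z}) (del_vertex z E) u \<le> 2"
        using deg degree_del_vertex_le[OF finV, of u z E] by fastforce
    qed
  qed
  have sinks: "leaf_sink_orientable V E"
    unfolding leaf_sink_orientable_def
  proof (intro ballI impI)
    fix z assume z: "z \<in> V" "degree V E z \<le> 1"
    show "\<exists>D. outdeg1_orientation V E D \<and> (\<forall>w. \<not> D z w)"
      using leaf_sink_orientable_step[OF sg deg z conjunct2[OF IH[OF z(1)]] conjunct1[OF IH[OF z(1)]]] .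
  qed
  moreover have "\<exists>D. outdeg1_orientation V E D"
  proof (cases "\<exists>u\<in>V. degree V E u = 2")
    case True
    then obtain u where "u \<in> V" "degree V E u = 2" by blast
    then show ?thesis using outdeg1_orientation_regular_step[OF sg deg _ _ conjunct1[OF IH]] by blast
  next
    case False
    show ?thesis
    proof (cases "V = {}")
      case True
      then have "outdeg1_orientation V E (\<lambda>_ _. False)"
        using simple_graph_edgeD(1)[OF sg] unfolding outdeg1_orientation_def orientation_def by blast
      then show ?thesis by blast
    next
      case False
      then obtain z where "z \<in> V" by blast
      moreover have "degree V E z \<le> 1" using deg \<open>\<not> (\<exists>u\<in>V. degree V E u = 2)\<close> \<open>z \<in> V\<close> by fastforce
      ultimately show ?thesis using sinks unfolding leaf_sink_orientable_def by blast
    qed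
  qed
  ultimately show ?case by blast
qed

section \<open>Deleting a simplicial vertex\<close>

definition simplicial :: "('a \<Rightarrow> 'a \<Rightarrow> bool) \<Rightarrow> 'a \<Rightarrow> bool" where
  "simplicial E v \<longleftrightarrow> (\<forall>x y. E v x \<longrightarrow> E v y \<longrightarrow> x \<noteq> y \<longrightarrow> E x y)"

lemma one_perfect_orientation_add_simplicial:
  assumes sg: "simple_graph V E" and simpl: "simplicial E v"
    and opo: "one_perfect_orientation (V - {v}) (del_vertex v E) D"
  shows "one_perfect_orientation V E (\<lambda>u w. D u w \<or> u = v \<and> E v w)"
proof -
  note o = one_perfect_orientationD[OF opo]
  have nv: "u \<noteq> v" "w \<noteq> v" if "D u w" for u w using o(1)[OF that] unfolding del_vertex_def by simp_all
  have Esym: "\<And>u w. E u w \<Longrightarrow> E w u" and Eirr: "\<And>u. \<not> E u u"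
    using simple_graph_edgeD[OF sg] by blast+
  have "orientation V E (\<lambda>u w. D u w \<or> u = v \<and> E v w)"
    unfolding orientation_def
  proof (intro conjI allI impI)
    fix u w assume "D u w \<or> u = v \<and> E v w"
    then show "E u w" using o(1) unfolding del_vertex_def by blast
  next
    fix u w assume e: "E u w"
    show "(D u w \<or> u = v \<and> E v w) \<or> (D w u \<or> w = v \<and> E v u)"
    proof (cases "u = v \<or> w = v")
      case True then show ?thesis using e Esym by blast
    next
      case False
      then have "del_vertex v E u w" using e unfolding del_vertex_def by simp
      then show ?thesis using o(2) by blast
    qed
  next
    fix u w assume "D u w \<or> u = v \<and> E v w"
    then show "\<not> (D w u \<or> w = v \<and> E v u)" using o(3) nv Eirr by blast
  qed
  moreover have "E x y"
    if "u \<in> V" "D u x \<or> u = v \<and> E v x" "D u y \<or> u = v \<and> E v y" "x \<noteq> y" for u x y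
  proof (cases "u = v")
    case True
    then show ?thesis using simpl that nv unfolding simplicial_def by blast
  next
    case False
    then have "del_vertex v E x y" using o(4)[of u x y] that by blast
    then show ?thesis unfolding del_vertex_def by simp
  qed
  ultimately show ?thesis unfolding one_perfect_orientation_def by blast
qed

text \<open>A walk through a simplicial vertex can skip it, as its neighbours are pairwise adjacent.\<close>

lemma reachable_del_simplicial:
  assumes sg: "simple_graph V E" and simpl: "simplicial E v" and u0: "E v u0"
    and "reachable V E u0 a" "a \<noteq> v"
  shows "reachable (V - {v}) (del_vertex v E) u0 a"
proof -
  let ?V' = "V - {v}" and ?E' = "del_vertex v E"
  have u0V: "u0 \<in> ?V'" using simple_graph_edgeD[OF sg u0] by blast
  have "(\<lambda>x y. x \<in> V \<and> y \<in> V \<and> E x y)\<^sup>*\<^sup>* u0 a"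
    using assms(4) unfolding reachable_def by blast
  then have "a = v \<or> reachable ?V' ?E' u0 a"
  proof (induction rule: rtranclp_induct)
    case base then show ?case using reachable_refl[OF u0V] by simp
  next
    case (step y z)
    show ?case
    proof (cases "z = v \<or> z = u0")
      case True then show ?thesis using reachable_refl[OF u0V] by blast
    next
      case False
      then have z: "z \<in> ?V'" "z \<noteq> u0" using step(2) by simp_all
      show ?thesis
      proof (cases "y = v")
        case True
        then have "E v z" using step(2) by simp
        then have "E u0 z" using simpl u0 z(2) unfolding simplicial_def by blast
        then have "?E' u0 z" using z(1) u0V unfolding del_vertex_def by simp
        then show ?thesis using reachable_edge[OF u0V z(1)] by blast
      next
        case False
        then have "reachable ?V' ?E' u0 y" using step(3) by blast
        moreover have "reachable ?V' ?E' y z"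
          using step(2) False z by (intro reachable_edge) (simp_all add: del_vertex_def)
        ultimately have "reachable ?V' ?E' u0 z" by (rule reachable_trans)
        then show ?thesis by blast
      qed
    qed
  qed
  then show ?thesis using assms(5) by simp
qed

lemma connected_del_simplicial:
  assumes sg: "simple_graph V E" and conn: "connected_graph V E"
    and simpl: "simplicial E v" and u0: "E v u0"
  shows "connected_graph (V - {v}) (del_vertex v E)"
  unfolding connected_graph_def
proof (intro conjI ballI)
  let ?V' = "V - {v}" and ?E' = "del_vertex v E"
  have u0V: "u0 \<in> ?V'" using simple_graph_edgeD[OF sg u0] by blast
  then show "?V' \<noteq> {}" by blast
  have from_u0: "reachable ?V' ?E' u0 a" if "a \<in> ?V'" for a
    using reachable_del_simplicial[OF sg simpl u0 connected_graph_reachable[OF conn]] u0V that by blast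
  fix a b assume "a \<in> ?V'" "b \<in> ?V'"
  then show "reachable ?V' ?E' a b"
    using reachable_trans[OF reachable_sym_simple[OF simple_graph_del_vertex[OF sg] from_u0] from_u0]
    by simp
qed

lemma block_through_simplicial_complete:
  assumes sg: "simple_graph V E" and bc: "block_cactus V E" and simpl: "simplicial E v"
    and blk: "is_block V E W F" and v: "v \<in> W"
  shows "is_complete_graph W F"
proof -
  have "is_complete_graph W F" if cyc: "is_cycle_graph W F"
  proof (cases "card W = 3")
    case True then show ?thesis using cycle_graph_card_3_complete[OF cyc] by simp
  next
    case False
    then have c4: "4 \<le> card W" using cyc unfolding is_cycle_graph_def by simp
    obtain a b where ab: "{w \<in> W. F v w} = {a, b}" "a \<noteq> b"
      using cycle_graph_degree[OF cyc v] by (auto simp: card_2_iff)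
    then have "F v a" "F v b" "a \<in> W" "b \<in> W" by auto
    moreover have "\<And>x y. F x y \<Longrightarrow> E x y" using block_subgraph[OF blk] unfolding subgraph_def by blast
    ultimately have "E a b" using simpl ab(2) unfolding simplicial_def by blast
    then have "F a b" using block_induced[OF sg blk \<open>a \<in> W\<close> \<open>b \<in> W\<close>] by simp
    then show ?thesis
      using long_cycle_graph_nbrs_nonadjacent[OF cyc c4 \<open>F v a\<close> \<open>F v b\<close> ab(2)] by simp
  qed
  then show ?thesis using bc blk unfolding block_cactus_def by blast
qed

lemma block_del_simplicial:
  assumes sg: "simple_graph V E" and bc: "block_cactus V E" and simpl: "simplicial E v"
    and blk: "is_block (V - {v}) (del_vertex v E) W F"
  shows "is_block V E W F \<or> is_complete_graph W F"
proof -
  let ?V' = "V - {v}" and ?E' = "del_vertex v E"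
  have sub': "subgraph W F ?V' ?E'" using block_subgraph[OF blk] .
  then have sub: "subgraph W F V E" unfolding subgraph_def del_vertex_def by blast
  obtain WB FB where B: "is_block V E WB FB" "W \<subseteq> WB" "\<forall>u w. F u w \<longrightarrow> FB u w"
    using block_exists[OF sg sub block_biconnected[OF blk]] by blast
  have subB: "subgraph WB FB V E" using block_subgraph[OF B(1)] .
  show ?thesis
  proof (cases "v \<in> WB")
    case False
    then have "subgraph WB FB ?V' ?E'"
      using subB unfolding subgraph_def simple_graph_def del_vertex_def by blast
    then have "WB = W \<and> FB = F"
      using blk B(2,3) block_biconnected[OF B(1)] unfolding is_block_def by blast
    then show ?thesis using B(1) by simp
  next
    case True
    have compB: "is_complete_graph WB FB"
      using block_through_simplicial_complete[OF sg bc simpl B(1) True] .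
    have "F u w" if "u \<in> W" "w \<in> W" "u \<noteq> w" for u w
    proof -
      have "FB u w" using compB that B(2) unfolding is_complete_graph_def by blast
      then have "E u w" using subB unfolding subgraph_def by blast
      moreover have "u \<in> ?V'" "w \<in> ?V'" using that sub' unfolding subgraph_def by blast+
      ultimately have "?E' u w" unfolding del_vertex_def by simp
      then show ?thesis
        using block_induced[OF simple_graph_del_vertex[OF sg] blk that(1,2)] by simp
    qed
    then show ?thesis using sub unfolding is_complete_graph_def subgraph_def by blast
  qed
qed

lemma block_cactus_del_simplicial:
  assumes "simple_graph V E" "block_cactus V E" "simplicial E v"
  shows "block_cactus (V - {v}) (del_vertex v E)"
  using block_del_simplicial[OF assms] assms(2) unfolding block_cactus_def by blast

lemma long_cycle_block_del_simplicial:
  assumes "simple_graph V E" "block_cactus V E" "simplicial E v"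
    and "long_cycle_block (V - {v}) (del_vertex v E) W F"
  shows "long_cycle_block V E W F"
  using block_del_simplicial[OF assms(1-3)] complete_cycle_graph_card_le_3 assms(4)
  unfolding long_cycle_block_def by fastforce

section \<open>Graphs with at most one long cycle block are 1-perfectly orientable\<close>

lemma long_cycle_block_nbrs:
  assumes sg: "simple_graph V E" and lcb: "long_cycle_block V E W F" and u: "u \<in> W"
  shows "{w \<in> V. E u w} \<inter> W = {w \<in> W. F u w}"
proof -
  have blk: "is_block V E W F" using lcb unfolding long_cycle_block_def by simp
  show ?thesis
    using block_induced[OF sg blk u] block_subgraph[OF blk] unfolding subgraph_def by blast
qed

text \<open>In the induction below the cycle core is the unique long cycle block, or a single vertex if
  there is none.\<close>

definition cycle_core :: "'a set \<Rightarrow> ('a \<Rightarrow> 'a \<Rightarrow> bool) \<Rightarrow> 'a set \<Rightarrow> bool" where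
  "cycle_core V E R \<longleftrightarrow> R \<subseteq> V \<and> R \<noteq> {} \<and>
     (\<forall>v x y. v \<notin> R \<longrightarrow> x \<in> R \<longrightarrow> y \<in> R \<longrightarrow> reachable (V - {v}) (del_vertex v E) x y) \<and>
     (\<forall>W F. long_cycle_block V E W F \<longrightarrow> W \<subseteq> R)"

lemma cycle_core_reachable:
  "cycle_core V E R \<Longrightarrow> v \<notin> R \<Longrightarrow> x \<in> R \<Longrightarrow> y \<in> R \<Longrightarrow> reachable (V - {v}) (del_vertex v E) x y"
  unfolding cycle_core_def by blast

lemma cycle_core_subset: "cycle_core V E R \<Longrightarrow> R \<subseteq> V" "cycle_core V E R \<Longrightarrow> R \<noteq> {}"
  unfolding cycle_core_def by blast+

lemma cycle_core_long_cycle_block: "cycle_core V E R \<Longrightarrow> long_cycle_block V E W F \<Longrightarrow> W \<subseteq> R"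
  unfolding cycle_core_def by blast

lemma cycle_core_of_long_cycle_block:
  assumes lcb: "long_cycle_block V E W F"
    and uniq: "at_most_one_long_cycle_block V E"
  shows "cycle_core V E W"
proof -
  have blk: "is_block V E W F" and cyc: "is_cycle_graph W F"
    using lcb unfolding long_cycle_block_def by simp_all
  have sub: "subgraph W F V E" using block_subgraph[OF blk] .
  have "reachable (V - {v}) (del_vertex v E) x y" if "v \<notin> W" "x \<in> W" "y \<in> W" for v x y
  proof (rule reachable_mono)
    show "reachable W F x y"
      using cyc connected_graph_reachable[OF _ that(2,3)] unfolding is_cycle_graph_def by blast
    show "W \<subseteq> V - {v}" using sub that(1) unfolding subgraph_def by blast
    show "\<And>u w. u \<in> W \<Longrightarrow> w \<in> W \<Longrightarrow> F u w \<Longrightarrow> del_vertex v E u w"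
      using sub that(1) unfolding subgraph_def del_vertex_def by blast
  qed
  moreover have "W \<noteq> {}" using cyc unfolding is_cycle_graph_def connected_graph_def by blast
  moreover have "W' \<subseteq> W" if "long_cycle_block V E W' F'" for W' F'
    using uniq lcb that unfolding at_most_one_long_cycle_block_def by blast
  ultimately show "cycle_core V E W"
    using sub unfolding cycle_core_def subgraph_def by blast
qed

lemma cycle_core_exists:
  assumes sg: "simple_graph V E" and conn: "connected_graph V E"
    and uniq: "at_most_one_long_cycle_block V E"
  obtains R where "cycle_core V E R" "V \<subseteq> R \<Longrightarrow> \<forall>u\<in>V. degree V E u \<le> 2"
proof (cases "\<exists>W F. long_cycle_block V E W F")
  case True
  then obtain W F where lcb: "long_cycle_block V E W F" by blast
  have "degree V E u \<le> 2" if "V \<subseteq> W" "u \<in> V" for u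
  proof -
    have "{w \<in> V. E u w} = {w \<in> W. F u w}"
      using long_cycle_block_nbrs[OF sg lcb] that by blast
    moreover have "is_cycle_graph W F" using lcb unfolding long_cycle_block_def by simp
    ultimately show ?thesis
      using cycle_graph_degree[of W F u] that unfolding degree_def by auto
  qed
  then show ?thesis using that cycle_core_of_long_cycle_block[OF lcb uniq] by blast
next
  case False
  obtain r where r: "r \<in> V" using conn unfolding connected_graph_def by blast
  then have "cycle_core V E {r}"
    using False reachable_refl[of r "V - {_}"] unfolding cycle_core_def by auto
  moreover have "degree V E u \<le> 2" if "V \<subseteq> {r}" "u \<in> V" for u
  proof -
    have "{w \<in> V. E u w} = {}" using that simple_graph_edgeD(3)[OF sg] by blast
    then show ?thesis unfolding degree_def by (simp only: card.empty)
  qed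
  ultimately show ?thesis using that by blast
qed

definition dist_to :: "('a \<Rightarrow> 'a \<Rightarrow> bool) \<Rightarrow> 'a set \<Rightarrow> 'a \<Rightarrow> nat" where
  "dist_to E R x = (LEAST k. \<exists>p. p 0 = x \<and> p k \<in> R \<and> walk E p k)"

lemma dist_to_le: "p 0 = x \<Longrightarrow> p k \<in> R \<Longrightarrow> walk E p k \<Longrightarrow> dist_to E R x \<le> k"
  unfolding dist_to_def by (rule Least_le) blast

lemma dist_to_walk:
  assumes "simple_graph V E" "connected_graph V E" "R \<subseteq> V" "R \<noteq> {}" "x \<in> V"
  shows "\<exists>p. p 0 = x \<and> p (dist_to E R x) \<in> R \<and> walk E p (dist_to E R x)"
proof -
  obtain r where "r \<in> R" using assms(4) by blast
  then have "reachable V E x r" using connected_graph_reachable[OF assms(2,5)] assms(3) by blast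
  then obtain p k where "p 0 = x" "p k = r" "walk E p k" using reachable_iff_walk[OF assms(1,5)] by blast
  then have "\<exists>k p. p 0 = x \<and> p k \<in> R \<and> walk E p k" using \<open>r \<in> R\<close> by blast
  then show ?thesis unfolding dist_to_def by (rule LeastI2_ex) blast
qed

text \<open>A vertex at maximum distance from the core is not a cut vertex: shortest walks from the
  other vertices to the core avoid it.\<close>

lemma far_vertex_exists:
  assumes sg: "simple_graph V E" and conn: "connected_graph V E"
    and R: "R \<subseteq> V" "R \<noteq> {}" "\<not> V \<subseteq> R"
  obtains v u where "v \<in> V - R" "E v u"
    "\<forall>z\<in>V - {v}. \<exists>r\<in>R. reachable (V - {v}) (del_vertex v E) z r"
proof -
  let ?d = "dist_to E R"
  note d = dist_to_walk[OF sg conn R(1,2)]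
  have fin: "finite (?d ` V)" using sg unfolding simple_graph_def by simp
  moreover have "?d ` V \<noteq> {}" using R(1,2) by blast
  ultimately obtain v where v: "v \<in> V" "?d v = Max (?d ` V)" using Max_in by (metis imageE)
  then have v_max: "?d x \<le> ?d v" if "x \<in> V" for x using Max_ge[OF fin] that by simp
  obtain x where x: "x \<in> V" "x \<notin> R" using R(3) by blast
  have "?d x \<noteq> 0"
  proof
    assume "?d x = 0"
    then show False using d[OF x(1)] x(2) by auto
  qed
  then have "?d v \<noteq> 0" using v_max[OF x(1)] by simp
  obtain p where p: "p 0 = v" "p (?d v) \<in> R" "walk E p (?d v)" using d[OF v(1)] by blast
  then have "v \<notin> R" "E v (p 1)"
    using \<open>?d v \<noteq> 0\<close> dist_to_le[of "\<lambda>_. v" v 0 R E] walk_const[of E v] unfolding walk_def by auto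
  moreover have "\<exists>r\<in>R. reachable (V - {v}) (del_vertex v E) z r" if z: "z \<in> V - {v}" for z
  proof -
    obtain q where q: "q 0 = z" "q (?d z) \<in> R" "walk E q (?d z)" using d z by blast
    have "q i \<noteq> v" if "i \<le> ?d z" for i
    proof
      assume "q i = v"
      then have "?d v \<le> ?d z - i"
        using dist_to_le[OF _ _ walk_drop[OF q(3) that]] q(2) that by simp
      moreover have "i \<noteq> 0" using \<open>q i = v\<close> q(1) z by (metis DiffD2 insertI1)
      ultimately show False using v_max[of z] z \<open>?d v \<noteq> 0\<close> by auto
    qed
    then have "walk (del_vertex v E) q (?d z)"
      using q(3) unfolding walk_def del_vertex_def by auto
    then have "reachable (V - {v}) (del_vertex v E) z (q (?d z))"
      using reachable_iff_walk[OF simple_graph_del_vertex[OF sg]] z q(1) by blast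
    then show ?thesis using q(2) by blast
  qed
  ultimately show ?thesis using that v by blast
qed

lemma shortest_walk_inj:
  assumes "walk E q k" and shortest: "\<And>m. m < k \<Longrightarrow> \<not> (\<exists>p. p 0 = q 0 \<and> p m = q k \<and> walk E p m)"
  shows "inj_on q {..k}"
proof (rule inj_onI, rule ccontr)
  fix i j assume "i \<in> {..k}" "j \<in> {..k}" "q i = q j" "i \<noteq> j"
  then obtain a b where "a < b" "b \<le> k" "q a = q b" by (metis atMost_iff linorder_neqE_nat)
  then obtain p where "walk E p (k - (b - a))" "p 0 = q 0" "p (k - (b - a)) = q k"
    using walk_skip_loop[OF assms(1)] by blast
  moreover have "k - (b - a) < k" using \<open>a < b\<close> \<open>b \<le> k\<close> by simp
  ultimately show False using shortest by blast
qed

lemma inj_on_prepend: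
  assumes "inj_on q {..k}" "v \<notin> q ` {..k}"
  shows "inj_on (\<lambda>i. if i = 0 then v else q (i - 1)) {..<Suc (Suc k)}"
proof (rule inj_onI)
  fix i j assume "i \<in> {..<Suc (Suc k)}" "j \<in> {..<Suc (Suc k)}"
    and eq: "(if i = 0 then v else q (i - 1)) = (if j = 0 then v else q (j - 1))"
  then have ij: "i - 1 \<in> {..k}" "j - 1 \<in> {..k}" by auto
  show "i = j"
  proof (cases "i = 0 \<or> j = 0")
    case True
    then show ?thesis using eq ij assms(2) by (auto split: if_splits)
  next
    case False
    then have "q (i - 1) = q (j - 1)" using eq by simp
    then have "i - 1 = j - 1" using inj_on_eq_iff[OF assms(1) ij] by simp
    then show ?thesis using False by arith
  qed
qed

lemma cycle_in_long_cycle_block: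
  assumes sg: "simple_graph V E" and bc: "block_cactus V E"
    and L: "3 \<le> L" and inj: "inj_on c {..<L}" and inV: "\<And>i. i < L \<Longrightarrow> c i \<in> V"
    and edges: "\<And>i. Suc i < L \<Longrightarrow> E (c i) (c (Suc i))" and last: "E (c (L - 1)) (c 0)"
    and chordless: "\<not> E (c 1) (c (L - 1))"
  obtains W F where "long_cycle_block V E W F" "c ` {..<L} \<subseteq> W"
proof -
  obtain W F where blk: "is_block V E W F" and W: "c ` {..<L} \<subseteq> W"
    and F: "\<forall>u w. cycle_edges c L u w \<longrightarrow> F u w"
    using block_exists[OF sg subgraph_cycle_edges[OF sg inj L inV edges last]
        biconnected_cycle_edges[OF L inj]] by blast
  have "F (c 0) (c 1)" using F cycle_edges_step[of 0 L c] L by simp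
  moreover have "F (c 0) (c (L - 1))" using F cycle_edges_sym[OF cycle_edges_last] by blast
  moreover have "c 1 \<noteq> c (L - 1)" using inj_on_eq_iff[OF inj, of 1 "L - 1"] L by simp
  moreover have "\<not> F (c 1) (c (L - 1))" using chordless block_subgraph[OF blk] unfolding subgraph_def by blast
  moreover have "c 1 \<in> W" "c (L - 1) \<in> W" using W L by auto
  ultimately have "\<not> is_complete_graph W F" unfolding is_complete_graph_def by blast
  then have cyc: "is_cycle_graph W F" using bc blk unfolding block_cactus_def by blast
  then have "4 \<le> card W"
    using cycle_graph_long_if_nbrs_nonadjacent \<open>F (c 0) (c 1)\<close> \<open>F (c 0) (c (L - 1))\<close>
      \<open>c 1 \<noteq> c (L - 1)\<close> \<open>\<not> F (c 1) (c (L - 1))\<close> by metis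
  then have "long_cycle_block V E W F" using blk cyc unfolding long_cycle_block_def by blast
  then show ?thesis using that W by blast
qed

lemma simplicial_if_far:
  assumes sg: "simple_graph V E" and bc: "block_cactus V E" and core: "cycle_core V E R"
    and v: "v \<in> V - R" and far: "\<forall>z\<in>V - {v}. \<exists>r\<in>R. reachable (V - {v}) (del_vertex v E) z r"
  shows "simplicial E v"
  unfolding simplicial_def
proof (intro allI impI)
  fix x y assume vx: "E v x" and vy: "E v y" and "x \<noteq> y"
  show "E x y"
  proof (rule ccontr)
    assume nxy: "\<not> E x y"
    let ?V' = "V - {v}" and ?E' = "del_vertex v E"
    have sg': "simple_graph ?V' ?E'" using simple_graph_del_vertex[OF sg] .
    have xV: "x \<in> ?V'" and yV: "y \<in> ?V'" using simple_graph_edgeD[OF sg vx] simple_graph_edgeD[OF sg vy] by auto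
    obtain rx ry where r: "rx \<in> R" "ry \<in> R" "reachable ?V' ?E' x rx" "reachable ?V' ?E' y ry"
      using far xV yV by blast
    have "reachable ?V' ?E' rx ry" using cycle_core_reachable[OF core] v r(1,2) by blast
    with r(3) have "reachable ?V' ?E' x ry" by (rule reachable_trans)
    then have "reachable ?V' ?E' x y" using reachable_sym_simple[OF sg' r(4)] by (rule reachable_trans)
    then have "\<exists>k q. q 0 = x \<and> q k = y \<and> walk ?E' q k" using reachable_iff_walk[OF sg' xV] by blast
    then obtain k q where q: "q 0 = x" "q k = y" "walk ?E' q k"
      and shortest: "\<And>m. m < k \<Longrightarrow> \<not> (\<exists>p. p 0 = x \<and> p m = y \<and> walk ?E' p m)"
      using exists_least_iff[of "\<lambda>k. \<exists>q. q 0 = x \<and> q k = y \<and> walk ?E' q k"] by metis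
    have qV: "q i \<in> ?V'" if "i \<le> k" for i using walk_in_vertices[OF sg' q(3)] q(1) xV that by simp
    have qE: "E (q i) (q (Suc i))" if "i < k" for i using q(3) that unfolding walk_def del_vertex_def by simp
    have "k \<noteq> 0" using q(1,2) \<open>x \<noteq> y\<close> by (cases k) auto
    moreover have "k \<noteq> 1" using qE[of 0] q(1,2) nxy by auto
    ultimately have L: "3 \<le> Suc (Suc k)" by simp
    define c where "c i = (if i = 0 then v else q (i - 1))" for i
    have "inj_on q {..k}" using shortest_walk_inj[OF q(3)] shortest q(1,2) by blast
    moreover have "v \<notin> q ` {..k}" using qV by auto
    ultimately have inj: "inj_on c {..<Suc (Suc k)}" unfolding c_def by (rule inj_on_prepend)
    have inV: "c i \<in> V" if "i < Suc (Suc k)" for i using qV that v unfolding c_def by auto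
    have edges: "E (c i) (c (Suc i))" if "Suc i < Suc (Suc k)" for i
      using vx q(1) qE that unfolding c_def by (cases i) auto
    have last: "E (c (Suc (Suc k) - 1)) (c 0)"
      using simple_graph_edgeD(4)[OF sg vy] q(2) unfolding c_def by simp
    have "\<not> E (c 1) (c (Suc (Suc k) - 1))" using nxy q(1,2) unfolding c_def by simp
    then obtain W F where "long_cycle_block V E W F" "c ` {..<Suc (Suc k)} \<subseteq> W"
      using cycle_in_long_cycle_block[OF sg bc L inj inV edges last] by blast
    moreover have "c 0 = v" unfolding c_def by simp
    ultimately have "v \<in> R" using cycle_core_long_cycle_block[OF core] by blast
    then show False using v by simp
  qed
qed

theorem one_perfectly_orientable_if_at_most_one_long_cycle_block:
  assumes "simple_graph V E" "connected_graph V E" "block_cactus V E"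
    and "at_most_one_long_cycle_block V E"
  shows "one_perfectly_orientable V E"
  using assms
proof (induction "card V" arbitrary: V E rule: less_induct)
  case less
  note sg = less.prems(1) and conn = less.prems(2) and bc = less.prems(3) and uniq = less.prems(4)
  obtain R where core: "cycle_core V E R" and covered: "V \<subseteq> R \<Longrightarrow> \<forall>u\<in>V. degree V E u \<le> 2"
    using cycle_core_exists[OF sg conn uniq] by blast
  show ?case
  proof (cases "V \<subseteq> R")
    case True
    then obtain D where "outdeg1_orientation V E D"
      using outdeg1_orientation_exists_sink[OF sg covered] by blast
    then show ?thesis unfolding one_perfectly_orientable_def using outdeg1_orientation_one_perfect by blast
  next
    case False
    obtain v u where v: "v \<in> V - R" "E v u"
      and far: "\<forall>z\<in>V - {v}. \<exists>r\<in>R. reachable (V - {v}) (del_vertex v E) z r"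
      by (rule far_vertex_exists[OF sg conn cycle_core_subset[OF core] False])
    have simpl: "simplicial E v" using simplicial_if_far[OF sg bc core v(1) far] .
    have "one_perfectly_orientable (V - {v}) (del_vertex v E)"
    proof (rule less.hyps)
      have "finite V" using sg unfolding simple_graph_def by simp
      then show "card (V - {v}) < card V" using v(1) by (intro card_Diff1_less) simp_all
      show "simple_graph (V - {v}) (del_vertex v E)" using simple_graph_del_vertex[OF sg] .
      show "connected_graph (V - {v}) (del_vertex v E)" using connected_del_simplicial[OF sg conn simpl v(2)] .
      show "block_cactus (V - {v}) (del_vertex v E)" using block_cactus_del_simplicial[OF sg bc simpl] .
      show "at_most_one_long_cycle_block (V - {v}) (del_vertex v E)"
        using uniq long_cycle_block_del_simplicial[OF sg bc simpl]
        unfolding at_most_one_long_cycle_block_def by blast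
    qed
    then show ?thesis
      using one_perfect_orientation_add_simplicial[OF sg simpl] unfolding one_perfectly_orientable_def by blast
  qed
qed

theorem corollary3p3:
  fixes V :: "'a set" and E :: "'a \<Rightarrow> 'a \<Rightarrow> bool"
  assumes "simple_graph V E" and "connected_graph V E" and "block_cactus V E"
  shows "one_perfectly_orientable V E \<longleftrightarrow>
    (\<forall>W1 F1 W2 F2.
       is_block V E W1 F1 \<and> is_cycle_graph W1 F1 \<and> card W1 \<ge> 4 \<and>
       is_block V E W2 F2 \<and> is_cycle_graph W2 F2 \<and> card W2 \<ge> 4
       \<longrightarrow> W1 = W2 \<and> F1 = F2)"
proof -
  have "one_perfectly_orientable V E \<longleftrightarrow> at_most_one_long_cycle_block V E"
    using at_most_one_long_cycle_block_if_one_perfectly_orientable[OF assms(1,2)]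
      one_perfectly_orientable_if_at_most_one_long_cycle_block[OF assms] by blast
  then show ?thesis unfolding at_most_one_long_cycle_block_def long_cycle_block_def by blast
qed

end
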